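(* Let $X$ be a complete CAT(1) space with $\mathrm{Diam}(X)<\pi/2$. Then every vicinal mapping $T\colon X\to X$ has a fixed point.
   Context: A CAT(1) space is a $\pi$-geodesic metric space in which every geodesic triangle of perimeter $<2\pi$ satisfies the CAT(1) comparison inequality relative to comparison triangles in the unit sphere $\mathbb S^2$. With $C_z=\cos d(Tz,z)$, $T$ is vicinal if for all $x,y\in X$: $\bigl(C_x^2(1+C_y^2)+C_y^2(1+C_x^2)\bigr)\cos d(Tx,Ty)\ge C_x^2(1+C_y^2)\cos d(Tx,y)+C_y^2(1+C_x^2)\cos d(Ty,x)$. *)

theory Defs
  imports "HOL-Analysis.Analysis"
begin

definition S2 :: "(real^3) set" where
  "S2 = sphere 0 1"

definition sdist :: "real^3 \<Rightarrow> real^3 \<Rightarrow> real" where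
  "sdist u v = arccos (u \<bullet> v)"

definition geodesic_seg :: "(real \<Rightarrow> 'a::metric_space) \<Rightarrow> 'a \<Rightarrow> 'a \<Rightarrow> bool" where
  "geodesic_seg g x y \<longleftrightarrow> g 0 = x \<and> g (dist x y) = y \<and>
     (\<forall>s\<in>{0..dist x y}. \<forall>t\<in>{0..dist x y}. dist (g s) (g t) = \<bar>s - t\<bar>)"

definition pi_geodesic :: "'a::metric_space itself \<Rightarrow> bool" where
  "pi_geodesic _ \<longleftrightarrow> (\<forall>x y::'a. dist x y < pi \<longrightarrow> (\<exists>g. geodesic_seg g x y))"

text \<open>p is the point g s on the side g (from x to y) of the triangle, and p' is its
  comparison point on the side [x',y'] of the comparison triangle in S^2.\<close>

definition side_pt :: "(real \<Rightarrow> 'a::metric_space) \<Rightarrow> 'a \<Rightarrow> 'a \<Rightarrow> real^3 \<Rightarrow> real^3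
    \<Rightarrow> 'a \<Rightarrow> real^3 \<Rightarrow> bool" where
  "side_pt g x y x' y' p p' \<longleftrightarrow>
     (\<exists>s\<in>{0..dist x y}. p = g s \<and> p' \<in> S2 \<and> sdist x' p' = s \<and> sdist p' y' = dist x y - s)"

definition tri_pt :: "(real \<Rightarrow> 'a::metric_space) \<Rightarrow> (real \<Rightarrow> 'a) \<Rightarrow> (real \<Rightarrow> 'a)
    \<Rightarrow> 'a \<Rightarrow> 'a \<Rightarrow> 'a \<Rightarrow> real^3 \<Rightarrow> real^3 \<Rightarrow> real^3 \<Rightarrow> 'a \<Rightarrow> real^3 \<Rightarrow> bool" where
  "tri_pt g1 g2 g3 x y z x' y' z' p p' \<longleftrightarrow>
     side_pt g1 x y x' y' p p' \<or> side_pt g2 y z y' z' p p' \<or> side_pt g3 z x z' x' p p'"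

definition CAT1 :: "'a::metric_space itself \<Rightarrow> bool" where
  "CAT1 A \<longleftrightarrow> pi_geodesic A \<and>
    (\<forall>(x::'a) y z g1 g2 g3 x' y' z'.
       geodesic_seg g1 x y \<and> geodesic_seg g2 y z \<and> geodesic_seg g3 z x \<and>
       dist x y + dist y z + dist z x < 2 * pi \<and>
       x' \<in> S2 \<and> y' \<in> S2 \<and> z' \<in> S2 \<and>
       sdist x' y' = dist x y \<and> sdist y' z' = dist y z \<and> sdist z' x' = dist z x \<longrightarrow>
       (\<forall>p p' q q'. tri_pt g1 g2 g3 x y z x' y' z' p p' \<and> tri_pt g1 g2 g3 x y z x' y' z' q q'
          \<longrightarrow> dist p q \<le> sdist p' q'))"

definition vicinal :: "('a::metric_space \<Rightarrow> 'a) \<Rightarrow> bool" where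
  "vicinal T \<longleftrightarrow> (\<forall>x y.
     let Cx = cos (dist (T x) x); Cy = cos (dist (T y) y) in
     (Cx^2 * (1 + Cy^2) + Cy^2 * (1 + Cx^2)) * cos (dist (T x) (T y))
       \<ge> Cx^2 * (1 + Cy^2) * cos (dist (T x) y) + Cy^2 * (1 + Cx^2) * cos (dist (T y) x))"

end

theory Submission
  imports Defs
begin

text \<open>
  Fix an orbit x_n = T^n x_0 and let F z be the lower limit of cos d(z, x_n). Comparing a
  triangle x y w with its model in the sphere gives cos d(x,w) + cos d(y,w) <= 2 cos(d(x,y)/2) cos d(m,w)
  for the midpoint m of a geodesic from x to y, so F x + F y <= 2 cos(d(x,y)/2) F m. As all distances
  are below pi/2, F is positive; hence maximising sequences of F are Cauchy, F attains its supremum,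
  and the maximiser is unique. Vicinality makes cos d(Tz, x_(n+1)) a weighted mean of cos d(Tz, x_n)
  and cos d(T x_n, z) with weights bounded away from 0, so the deficit of cos d(Tz, x_n) below any
  eventual lower bound of cos d(z, x_n) decays geometrically; thus F(Tz) >= F z, and the maximiser
  is fixed by T.
\<close>

lemma inner_vector_3:
  "(vector [a1, a2, a3] :: real^3) \<bullet> vector [b1, b2, b3] = a1 * b1 + a2 * b2 + a3 * b3"
  by (simp add: inner_vec_def sum_3)

lemma vector_3_in_S2: "(vector [a1, a2, a3] :: real^3) \<in> S2 \<longleftrightarrow> a1 * a1 + a2 * a2 + a3 * a3 = 1"
  by (simp add: S2_def norm_eq_sqrt_inner inner_vector_3)

lemma in_S2_iff_inner_self: "u \<in> S2 \<longleftrightarrow> u \<bullet> u = 1"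
  by (simp add: S2_def norm_eq_sqrt_inner)

lemma S2_inner_bounds:
  assumes "u \<in> S2" "v \<in> S2"
  shows "-1 \<le> u \<bullet> v" "u \<bullet> v \<le> 1"
proof -
  have "\<bar>u \<bullet> v\<bar> \<le> norm u * norm v" by (rule Cauchy_Schwarz_ineq2)
  then show "-1 \<le> u \<bullet> v" "u \<bullet> v \<le> 1" using assms by (simp_all add: S2_def abs_le_iff)
qed

lemma cos_sdist: "u \<in> S2 \<Longrightarrow> v \<in> S2 \<Longrightarrow> cos (sdist u v) = u \<bullet> v"
  unfolding sdist_def using S2_inner_bounds by (simp add: cos_arccos)

lemma sdist_bounds: "u \<in> S2 \<Longrightarrow> v \<in> S2 \<Longrightarrow> 0 \<le> sdist u v \<and> sdist u v \<le> pi"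
  unfolding sdist_def using S2_inner_bounds by (simp add: arccos_lbound arccos_ubound)

lemma sdist_eqI: "0 \<le> t \<Longrightarrow> t \<le> pi \<Longrightarrow> u \<bullet> v = cos t \<Longrightarrow> sdist u v = t"
  unfolding sdist_def by (simp add: arccos_cos)

lemma spherical_triangle_exists:
  assumes "0 \<le> a" "0 \<le> c" "a + c \<le> pi" "\<bar>a - c\<bar> \<le> b" "b \<le> a + c"
  obtains x' y' z' where "x' \<in> S2" "y' \<in> S2" "z' \<in> S2"
    "sdist x' y' = a" "sdist y' z' = b" "sdist z' x' = c"
proof -
  have "cos (a + c) \<le> cos b" "cos b \<le> cos \<bar>a - c\<bar>"
    by (rule cos_monotone_0_pi_le; use assms in linarith)+
  then have bounds: "\<bar>cos b - cos a * cos c\<bar> \<le> sin a * sin c"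
    by (simp add: cos_add cos_diff abs_le_iff)
  \<comment> \<open>the cosine of the angle at x' prescribed by the spherical law of cosines\<close>
  define t where "t = (cos b - cos a * cos c) / (sin a * sin c)"
  have t_eq: "sin a * sin c * t = cos b - cos a * cos c"
    using bounds by (cases "sin a * sin c = 0") (auto simp: t_def)
  have "\<bar>t\<bar> \<le> 1" using bounds by (simp add: t_def abs_divide divide_le_eq)
  then have t_sq: "t * t \<le> 1" by (simp add: abs_square_le_1[unfolded power2_eq_square])
  define x' :: "real^3" where "x' = vector [1, 0, 0]"
  define y' :: "real^3" where "y' = vector [cos a, sin a, 0]"
  define z' :: "real^3" where "z' = vector [cos c, sin c * t, sin c * sqrt (1 - t * t)]"
  have sqrt_sq: "sqrt (1 - t * t) * sqrt (1 - t * t) = 1 - t * t" using t_sq by simp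
  have "x' \<in> S2" "y' \<in> S2" unfolding x'_def y'_def vector_3_in_S2
    by (simp_all add: sin_squared_eq[unfolded power2_eq_square])
  moreover have "z' \<in> S2" unfolding z'_def vector_3_in_S2
    using sqrt_sq sin_squared_eq[of c, unfolded power2_eq_square] by algebra
  moreover have "sdist x' y' = a" "sdist z' x' = c"
    using assms by (simp_all add: sdist_eqI x'_def y'_def z'_def inner_vector_3)
  moreover have "sdist y' z' = b"
    using assms t_eq by (intro sdist_eqI) (auto simp: y'_def z'_def inner_vector_3 algebra_simps)
  ultimately show ?thesis using that by blast
qed

lemma S2_midpoint:
  assumes "x' \<in> S2" "y' \<in> S2" "sdist x' y' < pi"
  obtains m' where "m' \<in> S2" "sdist x' m' = sdist x' y' / 2" "sdist m' y' = sdist x' y' / 2"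
    "\<And>w. 2 * cos (sdist x' y' / 2) * (m' \<bullet> w) = x' \<bullet> w + y' \<bullet> w"
proof -
  define h where "h = sdist x' y' / 2"
  have h: "0 \<le> h" "h < pi / 2" using assms sdist_bounds[of x' y'] by (auto simp: h_def)
  have cos_h: "cos h > 0" using h by (intro cos_gt_zero_pi) auto
  have xy: "x' \<bullet> y' = 2 * cos h * cos h - 1"
    using cos_sdist[OF assms(1,2)] cos_double_cos[of h] by (simp add: h_def power2_eq_square)
  have xx: "x' \<bullet> x' = 1" and yy: "y' \<bullet> y' = 1" using assms in_S2_iff_inner_self by blast+
  define m' where "m' = (1 / (2 * cos h)) *\<^sub>R (x' + y')"
  have mw: "2 * cos h * (m' \<bullet> w) = x' \<bullet> w + y' \<bullet> w" for w
    using cos_h by (simp add: m'_def inner_add_left)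
  have "m' \<bullet> m' = 1"
    using mw[of m'] cos_h xx yy xy by (simp add: m'_def inner_add_right inner_commute field_simps)
  moreover have "x' \<bullet> m' = cos h" "m' \<bullet> y' = cos h"
    using mw[of x'] mw[of y'] cos_h xx yy xy by (simp_all add: inner_commute field_simps)
  ultimately have "m' \<in> S2" "sdist x' m' = h" "sdist m' y' = h"
    using h by (simp_all add: in_S2_iff_inner_self sdist_eqI)
  then show ?thesis using that mw unfolding h_def by blast
qed

lemma CAT1_geodesic_exists:
  fixes x y :: "'a::metric_space"
  assumes "CAT1 TYPE('a)" "dist x y < pi"
  obtains g where "geodesic_seg g x y"
  using assms unfolding CAT1_def pi_geodesic_def by blast

lemma CAT1_comparison:
  fixes x y z :: "'a::metric_space"
  assumes "CAT1 TYPE('a)"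
    and "geodesic_seg g1 x y" "geodesic_seg g2 y z" "geodesic_seg g3 z x"
    and "dist x y + dist y z + dist z x < 2 * pi"
    and "x' \<in> S2" "y' \<in> S2" "z' \<in> S2"
    and "sdist x' y' = dist x y" "sdist y' z' = dist y z" "sdist z' x' = dist z x"
    and "tri_pt g1 g2 g3 x y z x' y' z' p p'" "tri_pt g1 g2 g3 x y z x' y' z' q q'"
  shows "dist p q \<le> sdist p' q'"
  using assms unfolding CAT1_def by blast

lemma CAT1_cos_dist_midpoint:
  fixes x y z :: "'a::metric_space"
  assumes cat: "CAT1 TYPE('a)" and g: "geodesic_seg g x y"
    and small: "dist x y + dist z x < pi" "dist y z < pi"
  shows "cos (dist x z) + cos (dist y z) \<le> 2 * cos (dist x y / 2) * cos (dist (g (dist x y / 2)) z)"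
proof -
  define a b c where "a = dist x y" and "b = dist y z" and "c = dist z x"
  have "c < pi" using small zero_le_dist[of x y] unfolding c_def by linarith
  obtain g2 where g2: "geodesic_seg g2 y z" by (rule CAT1_geodesic_exists[OF cat small(2)])
  obtain g3 where g3: "geodesic_seg g3 z x"
    by (rule CAT1_geodesic_exists[OF cat \<open>c < pi\<close>[unfolded c_def]])
  have "\<bar>a - c\<bar> \<le> b" "b \<le> a + c"
    using dist_triangle[of x z y] dist_triangle[of z y x] dist_triangle[of y x z]
      dist_commute[of y x] dist_commute[of z y] dist_commute[of x z]
    unfolding a_def b_def c_def by linarith+
  then obtain x' y' z' where tri: "x' \<in> S2" "y' \<in> S2" "z' \<in> S2"
      "sdist x' y' = a" "sdist y' z' = b" "sdist z' x' = c"
    using spherical_triangle_exists[of a c b] small unfolding a_def c_def by auto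
  have "sdist x' y' < pi" using small zero_le_dist[of z x] tri(4) unfolding a_def by linarith
  then obtain m' where m': "m' \<in> S2" "sdist x' m' = a / 2" "sdist m' y' = a / 2"
      "\<And>w. 2 * cos (a / 2) * (m' \<bullet> w) = x' \<bullet> w + y' \<bullet> w"
    using S2_midpoint[OF tri(1,2)] unfolding tri(4) by blast
  have "tri_pt g g2 g3 x y z x' y' z' (g (a / 2)) m'"
    using m' unfolding tri_pt_def side_pt_def a_def by (intro disjI1 bexI[of _ "dist x y / 2"]) auto
  moreover have "tri_pt g g2 g3 x y z x' y' z' z z'"
    using g3 tri(3,6) sdist_eqI[of 0 z' z'] in_S2_iff_inner_self
    unfolding tri_pt_def side_pt_def geodesic_seg_def c_def by (intro disjI2 disjI2 bexI[of _ 0]) auto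
  moreover have "dist x y + dist y z + dist z x < 2 * pi" using small by linarith
  ultimately have "dist (g (a / 2)) z \<le> sdist m' z'"
    using CAT1_comparison[OF cat g g2 g3 _ tri(1-3)] tri(4-6) unfolding a_def b_def c_def by blast
  then have "cos (sdist m' z') \<le> cos (dist (g (a / 2)) z)"
    using sdist_bounds[OF m'(1) tri(3)] by (intro cos_monotone_0_pi_le) auto
  then have "m' \<bullet> z' \<le> cos (dist (g (a / 2)) z)" using cos_sdist[OF m'(1) tri(3)] by simp
  moreover have "cos (a / 2) \<ge> 0"
    using small zero_le_dist[of x y] zero_le_dist[of z x] unfolding a_def by (intro cos_ge_zero; linarith)
  ultimately have "2 * cos (a / 2) * (m' \<bullet> z') \<le> 2 * cos (a / 2) * cos (dist (g (a / 2)) z)"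
    by (simp add: mult_left_mono)
  moreover have "x' \<bullet> z' = cos c" "y' \<bullet> z' = cos b"
    using cos_sdist[OF tri(3,1)] cos_sdist[OF tri(2,3)] tri(5,6) by (simp_all add: inner_commute)
  ultimately show ?thesis using m'(4)[of z'] unfolding a_def b_def c_def by (simp add: dist_commute)
qed

text \<open>The lower limit of a bounded real sequence; the library's Liminf needs a complete lattice.\<close>

definition lower_limit :: "(nat \<Rightarrow> real) \<Rightarrow> real" where
  "lower_limit u = Sup {r. \<forall>\<^sub>F n in sequentially. r \<le> u n}"

lemma lower_limit_ge:
  assumes "bdd_above (range u)" "\<forall>\<^sub>F n in sequentially. r \<le> u n"
  shows "r \<le> lower_limit u"
proof -
  obtain b where b: "\<And>n. u n \<le> b" using assms(1) by (auto simp: bdd_above_def)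
  have "bdd_above {r. \<forall>\<^sub>F n in sequentially. r \<le> u n}"
  proof (rule bdd_aboveI)
    fix s assume "s \<in> {r. \<forall>\<^sub>F n in sequentially. r \<le> u n}"
    then obtain N where "\<forall>n\<ge>N. s \<le> u n" by (auto simp: eventually_sequentially)
    then show "s \<le> b" using b[of N] by auto
  qed
  then show ?thesis unfolding lower_limit_def using assms(2) by (intro cSup_upper) auto
qed

lemma lower_limit_le:
  assumes "bdd_below (range u)" "\<And>r. \<forall>\<^sub>F n in sequentially. r \<le> u n \<Longrightarrow> r \<le> a"
  shows "lower_limit u \<le> a"
proof -
  obtain b where "\<And>n. b \<le> u n" using assms(1) by (auto simp: bdd_below_def)
  then have "b \<in> {r. \<forall>\<^sub>F n in sequentially. r \<le> u n}" by simp
  then show ?thesis unfolding lower_limit_def using assms(2) by (intro cSup_least) auto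
qed

lemma lower_limit_le_add_const:
  assumes "bdd_below (range u)" "bdd_above (range v)" "\<forall>\<^sub>F n in sequentially. u n \<le> v n + c"
  shows "lower_limit u \<le> lower_limit v + c"
proof (rule lower_limit_le[OF assms(1)])
  fix r assume "\<forall>\<^sub>F n in sequentially. r \<le> u n"
  with assms(3) have "\<forall>\<^sub>F n in sequentially. r - c \<le> v n" by eventually_elim simp
  then have "r - c \<le> lower_limit v" by (rule lower_limit_ge[OF assms(2)])
  then show "r \<le> lower_limit v + c" by simp
qed

lemma lower_limit_add_le_scale:
  assumes "bdd_below (range u)" "bdd_below (range v)" "bdd_above (range w)" "0 < k"
    and "\<forall>\<^sub>F n in sequentially. u n + v n \<le> k * w n"
  shows "lower_limit u + lower_limit v \<le> k * lower_limit w"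
proof -
  have sum: "r + s \<le> k * lower_limit w"
    if "\<forall>\<^sub>F n in sequentially. r \<le> u n" "\<forall>\<^sub>F n in sequentially. s \<le> v n" for r s
  proof -
    from that assms(5) have "\<forall>\<^sub>F n in sequentially. (r + s) / k \<le> w n"
      by eventually_elim (use assms(4) in \<open>simp add: field_simps\<close>)
    then have "(r + s) / k \<le> lower_limit w" by (rule lower_limit_ge[OF assms(3)])
    then show ?thesis using assms(4) by (simp add: field_simps)
  qed
  have "lower_limit u \<le> k * lower_limit w - s" if "\<forall>\<^sub>F n in sequentially. s \<le> v n" for s
    using sum[OF _ that] by (intro lower_limit_le[OF assms(1)]) (simp add: field_simps)
  then have "lower_limit v \<le> k * lower_limit w - lower_limit u"
    by (intro lower_limit_le[OF assms(2)]) (simp add: field_simps)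
  then show ?thesis by simp
qed

lemma lower_limit_ge_contracting:
  assumes "bdd_above (range u)" "0 \<le> q" "q < 1"
    and "\<forall>\<^sub>F n in sequentially. r - u (Suc n) \<le> q * max 0 (r - u n)"
  shows "r \<le> lower_limit u"
proof -
  define M where "M n = max 0 (r - u n)" for n
  obtain N where "\<And>n. n \<ge> N \<Longrightarrow> r - u (Suc n) \<le> q * M n"
    using assms(4) unfolding eventually_sequentially M_def by blast
  then have N: "M (Suc n) \<le> q * M n" if "n \<ge> N" for n
    using that assms(2) by (simp add: M_def)
  have M_geom: "M (k + N) \<le> q ^ k * M N" for k
  proof (induction k)
    case (Suc k)
    have "M (Suc k + N) \<le> q * M (k + N)" using N[of "k + N"] by simp
    also have "\<dots> \<le> q * (q ^ k * M N)" using Suc assms(2) by (rule mult_left_mono)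
    finally show ?case by simp
  qed simp
  have geom_lim: "(\<lambda>k. q ^ k * M N) \<longlonglongrightarrow> 0"
    using assms(2,3) by (intro tendsto_mult_left_zero LIMSEQ_realpow_zero) auto
  have "\<forall>\<^sub>F k in sequentially. norm (M (k + N)) \<le> q ^ k * M N"
    using M_geom by (simp add: M_def)
  then have "(\<lambda>k. M (k + N)) \<longlonglongrightarrow> 0" using geom_lim by (rule Lim_null_comparison)
  then have M_lim: "M \<longlonglongrightarrow> 0" by (rule LIMSEQ_offset)
  show ?thesis
  proof (rule field_le_epsilon)
    fix \<eta> :: real assume "0 < \<eta>"
    with M_lim have "\<forall>\<^sub>F n in sequentially. M n < \<eta>" by (rule order_tendstoD)
    then have "\<forall>\<^sub>F n in sequentially. r - \<eta> \<le> u n" by eventually_elim (simp add: M_def)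
    then have "r - \<eta> \<le> lower_limit u" by (rule lower_limit_ge[OF assms(1)])
    then show "r \<le> lower_limit u + \<eta>" by simp
  qed
qed

lemma bdd_above_range_cos: "bdd_above (range (\<lambda>n. cos (f n :: real)))"
  by (rule bdd_aboveI[of _ 1]) (auto simp: cos_le_one)

lemma bdd_below_range_cos: "bdd_below (range (\<lambda>n. cos (f n :: real)))"
  by (rule bdd_belowI[of _ "-1"]) (auto simp: cos_ge_minus_one)

lemma cos_diff_le_abs_diff: "cos (w::real) - cos z \<le> \<bar>w - z\<bar>"
proof -
  have "\<bar>cos w - cos z\<bar> = 2 * \<bar>sin ((w + z) / 2)\<bar> * \<bar>sin ((z - w) / 2)\<bar>"
    by (simp add: cos_diff_cos abs_mult)
  also have "\<dots> \<le> 2 * 1 * \<bar>(z - w) / 2\<bar>"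
    by (intro mult_mono abs_sin_x_le_abs_x) (auto simp: abs_sin_le_one)
  also have "\<dots> = \<bar>w - z\<bar>" by simp
  finally show ?thesis by linarith
qed

lemma weighted_mean_gap_le:
  fixes A B K \<beta> r u v :: real
  assumes "0 \<le> A" "0 < \<beta>" "\<beta> \<le> B" "A + B \<le> K" "A * u + B * r \<le> (A + B) * v"
  shows "r - v \<le> (1 - \<beta> / K) * max 0 (r - u)"
proof -
  have K: "0 < K" "0 < A + B" using assms by linarith+
  have "A \<le> (A + B) * (1 - \<beta> / K)"
  proof -
    have "(A + B) * (\<beta> / K) \<le> \<beta>"
      using assms K by (simp add: divide_le_eq mult.commute mult_left_mono)
    then show ?thesis using assms(3) by (simp add: algebra_simps)
  qed
  then have "(A + B) * (r - v) \<le> (A + B) * ((1 - \<beta> / K) * max 0 (r - u))"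
    using assms(1,5) mult_right_mono[of A "(A + B) * (1 - \<beta> / K)" "max 0 (r - u)"]
      mult_left_mono[of "r - u" "max 0 (r - u)" A]
    by (simp add: algebra_simps)
  then show ?thesis using K(2) by simp
qed

definition cos_midpoint_concave :: "('a::metric_space \<Rightarrow> real) \<Rightarrow> bool" where
  "cos_midpoint_concave F \<longleftrightarrow> (\<forall>x y. \<exists>m. F x + F y \<le> 2 * cos (dist x y / 2) * F m)"

lemma cos_midpoint_concave_le_Sup:
  fixes F :: "'a::metric_space \<Rightarrow> real"
  assumes "cos_midpoint_concave F" "bdd_above (range F)" "dist x y \<le> pi"
  shows "F x + F y \<le> 2 * cos (dist x y / 2) * Sup (range F)"
proof -
  obtain m where "F x + F y \<le> 2 * cos (dist x y / 2) * F m"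
    using assms(1) unfolding cos_midpoint_concave_def by blast
  also have "\<dots> \<le> 2 * cos (dist x y / 2) * Sup (range F)"
  proof -
    have "0 \<le> cos (dist x y / 2)"
      using assms(3) zero_le_dist[of x y] pi_gt_zero by (intro cos_ge_zero) linarith+
    then show ?thesis using assms(2) by (intro mult_left_mono cSup_upper) auto
  qed
  finally show ?thesis .
qed

lemma cos_midpoint_concave_maximising_Cauchy:
  fixes F :: "'a::metric_space \<Rightarrow> real"
  assumes conc: "cos_midpoint_concave F" and bdd: "bdd_above (range F)" and pos: "0 < Sup (range F)"
    and diam: "\<And>x y::'a. dist x y \<le> pi" and zs: "\<And>k. Sup (range F) - 1 / Suc k < F (zs k)"
  shows "Cauchy zs"
proof (rule metric_CauchyI)
  fix e :: real assume "0 < e"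
  define s where "s = Sup (range F)"
  define e' where "e' = min e pi"
  have e': "0 < e'" "e' \<le> e" using \<open>0 < e\<close> by (auto simp: e'_def)
  have "cos (e' / 2) < cos 0" using \<open>0 < e\<close> by (intro cos_monotone_0_pi) (auto simp: e'_def min_le_iff_disj)
  then have "0 < (1 - cos (e' / 2)) * s" using pos by (simp add: s_def)
  then obtain M where M: "inverse (Suc M) < (1 - cos (e' / 2)) * s" using reals_Archimedean by blast
  have "dist (zs m) (zs n) < e" if "M \<le> m" "M \<le> n" for m n
  proof -
    have "1 / Suc m \<le> inverse (Suc M)" "1 / Suc n \<le> inverse (Suc M)"
      using that by (simp_all add: divide_inverse)
    then have "2 * (cos (e' / 2) * s) < F (zs m) + F (zs n)"
      using zs[of m, folded s_def] zs[of n, folded s_def] M left_diff_distrib[of 1 "cos (e' / 2)" s] by linarith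
    also have "\<dots> \<le> 2 * (cos (dist (zs m) (zs n) / 2) * s)"
      using cos_midpoint_concave_le_Sup[OF conc bdd diam] unfolding s_def by (simp only: mult.assoc)
    finally have cos_lt: "cos (e' / 2) < cos (dist (zs m) (zs n) / 2)"
      using pos unfolding s_def by (simp only: mult_less_cancel_left_pos mult_less_cancel_right_pos zero_less_numeral)
    show ?thesis
    proof (rule ccontr)
      assume "\<not> dist (zs m) (zs n) < e"
      then have "e' / 2 \<le> dist (zs m) (zs n) / 2" using e' by linarith
      moreover have "dist (zs m) (zs n) / 2 \<le> pi" using diam[of "zs m" "zs n"] pi_gt_zero by linarith
      ultimately have "cos (dist (zs m) (zs n) / 2) \<le> cos (e' / 2)"
        using e' by (intro cos_monotone_0_pi_le) auto
      with cos_lt show False by linarith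
    qed
  qed
  then show "\<exists>M. \<forall>m\<ge>M. \<forall>n\<ge>M. dist (zs m) (zs n) < e" by blast
qed

lemma cos_midpoint_concave_Sup_attained:
  fixes F :: "'a::complete_space \<Rightarrow> real"
  assumes conc: "cos_midpoint_concave F" and bdd: "bdd_above (range F)" and pos: "0 < Sup (range F)"
    and lip: "\<And>x y. F x \<le> F y + dist x y" and diam: "\<And>x y::'a. dist x y \<le> pi"
  shows "\<exists>z. F z = Sup (range F)"
proof -
  define s where "s = Sup (range F)"
  have "\<exists>z. s - 1 / Suc k < F z" for k
    using less_cSup_iff[of "range F" "s - 1 / Suc k"] bdd unfolding s_def by auto
  then obtain zs where zs: "\<And>k. s - 1 / Suc k < F (zs k)" by metis
  then have "Cauchy zs" unfolding s_def by (rule cos_midpoint_concave_maximising_Cauchy[OF conc bdd pos diam])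
  then obtain z where "zs \<longlonglongrightarrow> z" using Cauchy_convergent convergent_def by blast
  then have dist_lim: "(\<lambda>k. dist (zs k) z) \<longlonglongrightarrow> 0" by (rule tendsto_dist_iff[THEN iffD1])
  have "(\<lambda>k. 1 / real (Suc k)) \<longlonglongrightarrow> 0" using LIMSEQ_Suc[OF lim_inverse_n'] by simp
  from tendsto_diff[OF tendsto_diff[OF tendsto_const this] dist_lim]
  have lower_lim: "(\<lambda>k. s - 1 / Suc k - dist (zs k) z) \<longlonglongrightarrow> s" by simp
  have "s - 1 / Suc k - dist (zs k) z \<le> F z" for k
    using zs[of k] lip[of "zs k" z] by linarith
  then have "s \<le> F z" by (intro LIMSEQ_le_const2[OF lower_lim]) blast
  moreover have "F z \<le> s" using bdd by (simp add: s_def cSup_upper)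
  ultimately have "F z = s" by (rule antisym[rotated])
  then show ?thesis unfolding s_def by blast
qed

lemma cos_midpoint_concave_maximiser_unique:
  fixes F :: "'a::metric_space \<Rightarrow> real"
  assumes conc: "cos_midpoint_concave F" and bdd: "bdd_above (range F)" and pos: "0 < Sup (range F)"
    and diam: "dist x y \<le> pi" and max: "F x = Sup (range F)" "F y = Sup (range F)"
  shows "x = y"
proof (rule ccontr)
  assume "x \<noteq> y"
  moreover have "dist x y / 2 \<le> pi" using diam pi_gt_zero by linarith
  ultimately have "cos (dist x y / 2) < cos 0" by (intro cos_monotone_0_pi) auto
  then have "2 * cos (dist x y / 2) * Sup (range F) < F x + F y" using pos max by simp
  then show False using cos_midpoint_concave_le_Sup[OF conc bdd diam] by linarith
qed

definition liminf_cos_dist :: "(nat \<Rightarrow> 'a::metric_space) \<Rightarrow> 'a \<Rightarrow> real" where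
  "liminf_cos_dist xs z = lower_limit (\<lambda>n. cos (dist z (xs n)))"

lemma liminf_cos_dist_le_1: "liminf_cos_dist xs z \<le> 1"
  unfolding liminf_cos_dist_def
proof (rule lower_limit_le[OF bdd_below_range_cos])
  fix r assume "\<forall>\<^sub>F n in sequentially. r \<le> cos (dist z (xs n))"
  then obtain n where "r \<le> cos (dist z (xs n))" using eventually_sequentially by auto
  then show "r \<le> 1" using cos_le_one order_trans by blast
qed

lemma liminf_cos_dist_ge:
  assumes "\<And>n. dist z (xs n) \<le> D" "D \<le> pi"
  shows "cos D \<le> liminf_cos_dist xs z"
  unfolding liminf_cos_dist_def using assms
  by (intro lower_limit_ge[OF bdd_above_range_cos] always_eventually allI cos_monotone_0_pi_le) auto

lemma liminf_cos_dist_le_add_dist: "liminf_cos_dist xs z \<le> liminf_cos_dist xs w + dist z w"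
  unfolding liminf_cos_dist_def
proof (intro lower_limit_le_add_const[OF bdd_below_range_cos bdd_above_range_cos]
    always_eventually allI)
  fix n
  have "cos (dist z (xs n)) - cos (dist w (xs n)) \<le> dist z w"
    using cos_diff_le_abs_diff[of "dist z (xs n)" "dist w (xs n)"] abs_dist_diff_le[of z "xs n" w]
      dist_commute[of "xs n" w] by linarith
  then show "cos (dist z (xs n)) \<le> cos (dist w (xs n)) + dist z w" by simp
qed

lemma liminf_cos_dist_cos_midpoint_concave:
  fixes xs :: "nat \<Rightarrow> 'a::metric_space"
  assumes cat: "CAT1 TYPE('a)" and small: "\<And>u v::'a. dist u v < pi / 2"
  shows "cos_midpoint_concave (liminf_cos_dist xs)"
  unfolding cos_midpoint_concave_def
proof (intro allI)
  fix x y :: 'a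
  have "dist x y < pi" using small[of x y] pi_gt_zero by linarith
  then obtain g where g: "geodesic_seg g x y" by (rule CAT1_geodesic_exists[OF cat])
  have "cos (dist x y / 2) > 0"
    using small[of x y] zero_le_dist[of x y] pi_gt_zero by (intro cos_gt_zero_pi) linarith+
  moreover have "cos (dist x (xs n)) + cos (dist y (xs n))
      \<le> 2 * cos (dist x y / 2) * cos (dist (g (dist x y / 2)) (xs n))" for n
    using small[of x y] small[of "xs n" x] small[of y "xs n"] pi_gt_zero
    by (intro CAT1_cos_dist_midpoint[OF cat g]) linarith+
  ultimately have "liminf_cos_dist xs x + liminf_cos_dist xs y
      \<le> 2 * cos (dist x y / 2) * liminf_cos_dist xs (g (dist x y / 2))"
    unfolding liminf_cos_dist_def
    by (intro lower_limit_add_le_scale bdd_below_range_cos bdd_above_range_cos always_eventually) auto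
  then show "\<exists>m. liminf_cos_dist xs x + liminf_cos_dist xs y \<le> 2 * cos (dist x y / 2) * liminf_cos_dist xs m"
    by blast
qed

lemma vicinal_step:
  fixes T :: "'a::metric_space \<Rightarrow> 'a"
  assumes vic: "vicinal T" and diam: "\<And>u v::'a. dist u v \<le> D" "D < pi / 2"
    and r: "r \<le> cos (dist (T y) z)"
  shows "r - cos (dist (T z) (T y)) \<le> (1 - cos D ^ 2 / 4) * max 0 (r - cos (dist (T z) y))"
proof -
  have "0 \<le> D" using diam(1)[of z z] by simp
  then have cos_D: "0 < cos D" using diam(2) by (intro cos_gt_zero_pi) auto
  have cos_sq: "cos D ^ 2 \<le> cos (dist u v) ^ 2" "cos (dist u v) ^ 2 \<le> 1" for u v :: 'a
  proof -
    have "cos D \<le> cos (dist u v)"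
      using diam \<open>0 \<le> D\<close> by (intro cos_monotone_0_pi_le) auto
    then show "cos D ^ 2 \<le> cos (dist u v) ^ 2" using cos_D by (intro power_mono) auto
  qed (simp add: abs_square_le_1 abs_cos_le_one)
  define a b where "a = cos (dist (T z) z) ^ 2" and "b = cos (dist (T y) y) ^ 2"
  have ab: "cos D ^ 2 \<le> a" "a \<le> 1" "cos D ^ 2 \<le> b" "b \<le> 1"
    using cos_sq unfolding a_def b_def by auto
  have "0 \<le> a" "0 \<le> b" unfolding a_def b_def by simp_all
  define A B where "A = a * (1 + b)" and "B = b * (1 + a)"
  have "A = a + a * b" "B = b + a * b" unfolding A_def B_def by (simp_all add: algebra_simps)
  moreover have "0 \<le> a * b" using \<open>0 \<le> a\<close> \<open>0 \<le> b\<close> by simp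
  moreover have "a * b \<le> 1" using ab \<open>0 \<le> b\<close> by (intro mult_le_one) auto
  ultimately have AB: "0 \<le> A" "cos D ^ 2 \<le> B" "A + B \<le> 4"
    using ab \<open>0 \<le> a\<close> by linarith+
  have "A * cos (dist (T z) y) + B * cos (dist (T y) z) \<le> (A + B) * cos (dist (T z) (T y))"
    using vic[unfolded vicinal_def Let_def, rule_format, of z y]
    unfolding A_def B_def a_def b_def by (simp add: algebra_simps)
  moreover have "B * r \<le> B * cos (dist (T y) z)"
    using r AB(2) by (intro mult_left_mono) (auto intro: order_trans[OF zero_le_power2])
  ultimately show ?thesis using weighted_mean_gap_le[OF AB(1) _ AB(2,3)] cos_D by simp
qed

lemma liminf_cos_dist_vicinal:
  fixes T :: "'a::metric_space \<Rightarrow> 'a"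
  assumes vic: "vicinal T" and orbit: "\<And>n. xs (Suc n) = T (xs n)"
    and diam: "\<And>u v::'a. dist u v \<le> D" "D < pi / 2"
  shows "liminf_cos_dist xs z \<le> liminf_cos_dist xs (T z)"
  unfolding liminf_cos_dist_def
proof (rule lower_limit_le[OF bdd_below_range_cos])
  fix r assume "\<forall>\<^sub>F n in sequentially. r \<le> cos (dist z (xs n))"
  then have r: "\<forall>\<^sub>F n in sequentially. r \<le> cos (dist (T (xs n)) z)"
    by (subst (asm) eventually_sequentially_Suc[symmetric]) (simp add: orbit dist_commute)
  have "0 \<le> D" using diam(1)[of z z] by simp
  then have "0 < cos D" using diam(2) by (intro cos_gt_zero_pi) auto
  then have q: "0 \<le> 1 - cos D ^ 2 / 4" "1 - cos D ^ 2 / 4 < 1"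
    using abs_square_le_1[of "cos D"] abs_cos_le_one[of D] by auto
  show "r \<le> lower_limit (\<lambda>n. cos (dist (T z) (xs n)))"
    using r by (intro lower_limit_ge_contracting[OF bdd_above_range_cos q])
      (auto elim: eventually_mono simp: orbit vicinal_step[OF vic diam])
qed

theorem corollary4p3:
  fixes T :: "'a::complete_space \<Rightarrow> 'a"
  assumes "CAT1 TYPE('a)"
    and "bounded (UNIV :: 'a set)"
    and "diameter (UNIV :: 'a set) < pi / 2"
    and "vicinal T"
  shows "\<exists>x. T x = x"
proof -
  define D where "D = diameter (UNIV :: 'a set)"
  have dist_le_D: "dist u v \<le> D" for u v :: 'a
    unfolding D_def using assms(2) by (intro diameter_bounded_bound) auto
  have D: "0 \<le> D" "D < pi / 2" using dist_le_D[of undefined undefined] assms(3) by (auto simp: D_def)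
  have dist_small: "dist u v < pi / 2" "dist u v \<le> pi" for u v :: 'a
    using dist_le_D[of u v] D pi_gt_zero by linarith+
  define F where "F = liminf_cos_dist (\<lambda>n. (T ^^ n) undefined)"
  have conc: "cos_midpoint_concave F"
    unfolding F_def using assms(1) dist_small(1) by (rule liminf_cos_dist_cos_midpoint_concave)
  have bdd: "bdd_above (range F)"
    unfolding F_def by (rule bdd_aboveI[of _ 1]) (auto simp: liminf_cos_dist_le_1)
  have "0 < cos D" using D by (intro cos_gt_zero_pi) auto
  also have "cos D \<le> F undefined" unfolding F_def using dist_le_D D by (intro liminf_cos_dist_ge) auto
  also have "\<dots> \<le> Sup (range F)" using bdd by (simp add: cSup_upper)
  finally have pos: "0 < Sup (range F)" .
  obtain z where z: "F z = Sup (range F)"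
    using cos_midpoint_concave_Sup_attained[OF conc bdd pos _ dist_small(2)]
      liminf_cos_dist_le_add_dist unfolding F_def by blast
  have "F z \<le> F (T z)" unfolding F_def using assms(4) dist_le_D D
    by (intro liminf_cos_dist_vicinal) auto
  then have "F (T z) = Sup (range F)" using z bdd by (simp add: cSup_upper antisym)
  then show ?thesis using cos_midpoint_concave_maximiser_unique[OF conc bdd pos dist_small(2) _ z] by blast
qed

end
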